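(* Let $G$ be a group endowed with an explicit solution to the conjugacy problem and with an algorithm which, for every $a\in G$, computes a finite generating set of the centralizer $C_G(a)$. Let $H<G$ be a subgroup satisfying Condition PC, witnessed by a triple $(K,K',\phi)$ where $\phi$ is computable, $K$ has a solution to the membership problem, and the finite subgroup $K'$ is given by the list of its elements. Then $H$ has an explicit solution to the conjugacy problem: there is an algorithm which, given $a,b\in H$, decides whether there exists $h'\in H$ with $b=(h')^{-1}ah'$ and, if so, outputs such an $h'$.
   Context: An explicit solution to the conjugacy problem in a group $G$ is an algorithm which, given $a,b\in G$, decides whether there is $c\in G$ with $a=c^{-1}bc$ and, if so, produces such a $c$. The centralizer $C_G(a)$ is the set of elements of $G$ commuting with $a$ (assumed finitely generated). A group $K$ has a solution to the membership problem if there is an algorithm which, given a finitely generated subgroup $L<K$ (by a finite generating set) and $g\in K$, decides whether $g\in L$. A subgroup $H<G$ satisfies Condition PC if there exist a group $K$, a subgroup $K'<K$ and a homomorphism $\phi:G\to K$ with $H=\phi^{-1}(K')$, such that $K$ has a solution to the membership problem and $K'$ is finite. *)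

theory Defs
  imports "HOL-Algebra.Algebra" "HOL-Library.Nat_Bijection"
begin

text \<open>Unary partial recursive functions on natural numbers, tuples being coded
by the Cantor pairing prod_encode.\<close>

datatype rf = Zero | Succ | Fst | Snd | Comp rf rf | Pair rf rf | Prim rf rf | Mn rf

inductive eval :: "rf \<Rightarrow> nat \<Rightarrow> nat \<Rightarrow> bool" where
  zero: "eval Zero x 0"
| succ: "eval Succ x (Suc x)"
| fst: "eval Fst x (fst (prod_decode x))"
| snd: "eval Snd x (snd (prod_decode x))"
| comp: "eval g x y \<Longrightarrow> eval f y z \<Longrightarrow> eval (Comp f g) x z"
| pair: "eval f x y \<Longrightarrow> eval g x z \<Longrightarrow> eval (Pair f g) x (prod_encode (y, z))"
| prim0: "eval f z y \<Longrightarrow> eval (Prim f g) (prod_encode (0, z)) y"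
| primS: "eval (Prim f g) (prod_encode (n, z)) r \<Longrightarrow>
           eval g (prod_encode (n, prod_encode (r, z))) y \<Longrightarrow>
           eval (Prim f g) (prod_encode (Suc n, z)) y"
| mn: "eval f (prod_encode (n, x)) 0 \<Longrightarrow>
        (\<forall>m<n. \<exists>v. v > 0 \<and> eval f (prod_encode (m, x)) v) \<Longrightarrow>
        eval (Mn f) x n"

definition computable :: "(nat \<Rightarrow> nat) \<Rightarrow> bool" where
  "computable F \<longleftrightarrow> (\<exists>p. \<forall>x. eval p x (F x))"

definition explicit_group :: "('a, 'm) monoid_scheme \<Rightarrow> (nat \<Rightarrow> 'a) \<Rightarrow> bool" where
  "explicit_group G \<nu> \<longleftrightarrow> group G \<and> range \<nu> = carrier G
     \<and> (\<exists>m. computable m \<and> (\<forall>x y. \<nu> (m (prod_encode (x, y))) = \<nu> x \<otimes>\<^bsub>G\<^esub> \<nu> y))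
     \<and> (\<exists>i. computable i \<and> (\<forall>x. \<nu> (i x) = inv\<^bsub>G\<^esub> \<nu> x))
     \<and> (\<exists>e. \<nu> e = \<one>\<^bsub>G\<^esub>)"

definition centralizer :: "('a, 'm) monoid_scheme \<Rightarrow> 'a \<Rightarrow> 'a set" where
  "centralizer G a = {g \<in> carrier G. g \<otimes>\<^bsub>G\<^esub> a = a \<otimes>\<^bsub>G\<^esub> g}"

definition explicit_conjugacy :: "('a, 'm) monoid_scheme \<Rightarrow> (nat \<Rightarrow> 'a) \<Rightarrow> bool" where
  "explicit_conjugacy G \<nu> \<longleftrightarrow> (\<exists>C. computable C \<and> (\<forall>a b.
      (C (prod_encode (a, b)) = 0 \<longleftrightarrow>
         \<not> (\<exists>c\<in>carrier G. \<nu> a = inv\<^bsub>G\<^esub> c \<otimes>\<^bsub>G\<^esub> \<nu> b \<otimes>\<^bsub>G\<^esub> c))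
    \<and> (\<forall>c'. C (prod_encode (a, b)) = Suc c' \<longrightarrow>
         \<nu> a = inv\<^bsub>G\<^esub> (\<nu> c') \<otimes>\<^bsub>G\<^esub> \<nu> b \<otimes>\<^bsub>G\<^esub> \<nu> c')))"

definition computable_centralizers :: "('a, 'm) monoid_scheme \<Rightarrow> (nat \<Rightarrow> 'a) \<Rightarrow> bool" where
  "computable_centralizers G \<nu> \<longleftrightarrow> (\<exists>Z. computable Z \<and> (\<forall>a.
      generate G (set (map \<nu> (list_decode (Z a)))) = centralizer G (\<nu> a)))"

definition membership_solvable :: "('a, 'm) monoid_scheme \<Rightarrow> (nat \<Rightarrow> 'a) \<Rightarrow> bool" where
  "membership_solvable K \<mu> \<longleftrightarrow> (\<exists>M. computable M \<and> (\<forall>ls g.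
      M (prod_encode (list_encode ls, g)) =
        (if \<mu> g \<in> generate K (set (map \<mu> ls)) then 1 else 0)))"

definition subgroup_explicit_conjugacy ::
    "('a, 'm) monoid_scheme \<Rightarrow> (nat \<Rightarrow> 'a) \<Rightarrow> 'a set \<Rightarrow> bool" where
  "subgroup_explicit_conjugacy G \<nu> H \<longleftrightarrow> (\<exists>p. \<forall>a b. \<nu> a \<in> H \<longrightarrow> \<nu> b \<in> H \<longrightarrow>
      (\<exists>r. eval p (prod_encode (a, b)) r
        \<and> (r = 0 \<longleftrightarrow> \<not> (\<exists>h\<in>H. \<nu> b = inv\<^bsub>G\<^esub> h \<otimes>\<^bsub>G\<^esub> \<nu> a \<otimes>\<^bsub>G\<^esub> h))
        \<and> (\<forall>h'. r = Suc h' \<longrightarrow> \<nu> h' \<in> H \<and> \<nu> b = inv\<^bsub>G\<^esub> (\<nu> h') \<otimes>\<^bsub>G\<^esub> \<nu> a \<otimes>\<^bsub>G\<^esub> \<nu> h')))"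

end

theory Submission
  imports Defs
begin

text \<open>If c conjugates a to b in G, the conjugators of a to b in G form the coset Z(a) c of
the centralizer Z(a) = C_G(a).  So a and b are conjugate in H = phi^-1(K') iff phi(Z(a) c) meets
K', i.e. iff k phi(c)^-1 lies in phi(Z(a)) for one of the finitely many k in K'.  The images
under phi of computed generators of Z(a) generate phi(Z(a)), so this is a membership question
in K.  Once conjugacy in H is decided, a conjugator is found by unbounded search: membership in
H is decided in K (K' is generated by itself), and equality in G is decided by the conjugacy
algorithm, an element being conjugate to 1 only if it is 1.\<close>

section \<open>Computable functions\<close>

lemma computable_comp: "computable f \<Longrightarrow> computable g \<Longrightarrow> computable (\<lambda>x. f (g x))"
  unfolding computable_def by (meson eval.comp)

lemma computable_pair:
  "computable f \<Longrightarrow> computable g \<Longrightarrow> computable (\<lambda>x. prod_encode (f x, g x))"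
  unfolding computable_def by (meson eval.pair)

lemma computable_zero: "computable (\<lambda>x. 0)"
  unfolding computable_def by (meson eval.zero)

lemma computable_Suc: "computable f \<Longrightarrow> computable (\<lambda>x. Suc (f x))"
  unfolding computable_def by (meson eval.succ eval.comp)

lemma computable_fst: "computable f \<Longrightarrow> computable (\<lambda>x. fst (prod_decode (f x)))"
  unfolding computable_def by (meson eval.fst eval.comp)

lemma computable_snd: "computable f \<Longrightarrow> computable (\<lambda>x. snd (prod_decode (f x)))"
  unfolding computable_def by (meson eval.snd eval.comp)

lemma eval_Prim:
  assumes "\<And>z. eval pf z (f z)" and "\<And>w. eval pg w (g w)"
  shows "eval (Prim pf pg) (prod_encode (n, z))
           (rec_nat (f z) (\<lambda>k r. g (prod_encode (k, prod_encode (r, z)))) n)"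
  by (induction n) (auto intro: eval.prim0 eval.primS assms)

lemma computable_id: "computable (\<lambda>x. x)"
proof -
  have "eval (Prim Zero Fst) (prod_encode (n, z)) (rec_nat 0 (\<lambda>k r. k) n)" for n z
    using eval_Prim[of Zero "\<lambda>_. 0" Fst "\<lambda>w. fst (prod_decode w)"] eval.zero eval.fst by simp
  then have "eval (Comp (Prim Zero Fst) (Pair Succ Zero)) x x" for x
    using eval.comp[OF eval.pair[OF eval.succ eval.zero]] by fastforce
  then show ?thesis unfolding computable_def by blast
qed

lemma computable_rec_nat:
  assumes "computable n" "computable f" "computable g"
  shows "computable (\<lambda>x. rec_nat (f x) (\<lambda>k r. g (prod_encode (k, prod_encode (r, x)))) (n x))"
proof -
  obtain pn pf pg pid where "\<And>x. eval pn x (n x)" "\<And>x. eval pf x (f x)" "\<And>x. eval pg x (g x)"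
    and "\<And>x. eval pid x x"
    using assms computable_id unfolding computable_def by metis
  then have "eval (Comp (Prim pf pg) (Pair pn pid)) x
     (rec_nat (f x) (\<lambda>k r. g (prod_encode (k, prod_encode (r, x)))) (n x))" for x
    by (blast intro: eval.comp eval.pair eval_Prim)
  then show ?thesis unfolding computable_def by blast
qed

lemma computable_const: "computable (\<lambda>x. c)"
  by (induction c) (use computable_zero computable_Suc in auto)

lemma computable_pred:
  assumes "computable f"
  shows "computable (\<lambda>x. f x - 1)"
proof -
  have "computable (\<lambda>x. rec_nat 0 (\<lambda>k r. k) (f x))"
    using computable_rec_nat[OF assms computable_zero computable_fst[OF computable_id]] by simp
  moreover have "rec_nat 0 (\<lambda>k r. k) m = m - 1" for m :: nat
    by (cases m) simp_all
  ultimately show ?thesis by simp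
qed

lemma computable_if_zero:
  assumes "computable f" "computable g" "computable h"
  shows "computable (\<lambda>x. if f x = 0 then g x else h x)"
proof -
  have "computable (\<lambda>w. h (snd (prod_decode (snd (prod_decode w)))))"
    by (intro computable_comp[OF assms(3)] computable_snd computable_id)
  from computable_rec_nat[OF assms(1,2) this]
  have "computable (\<lambda>x. rec_nat (g x) (\<lambda>k r. h x) (f x))" by simp
  moreover have "(if m = 0 then a else b) = rec_nat a (\<lambda>k r. b) m" for m a b :: nat
    by (cases m) simp_all
  ultimately show ?thesis by simp
qed

lemma computable_funpow:
  assumes "computable s" "computable n" "computable z"
  shows "computable (\<lambda>x. (s ^^ n x) (z x))"
proof -
  have "computable (\<lambda>w. s (fst (prod_decode (snd (prod_decode w)))))"
    by (intro computable_comp[OF assms(1)] computable_fst computable_snd computable_id)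
  from computable_rec_nat[OF assms(2,3) this]
  have "computable (\<lambda>x. rec_nat (z x) (\<lambda>k r. s r) (n x))" by simp
  moreover have "(s ^^ m) y = rec_nat y (\<lambda>k r. s r) m" for m y
    by (induction m) simp_all
  ultimately show ?thesis by simp
qed

lemma computable_Least:
  assumes "computable f" and "\<And>x. \<exists>n. f (prod_encode (n, x)) = 0"
  shows "computable (\<lambda>x. LEAST n. f (prod_encode (n, x)) = 0)"
proof -
  obtain p where p: "\<And>x. eval p x (f x)" using assms(1) unfolding computable_def by blast
  have "eval (Mn p) x (LEAST n. f (prod_encode (n, x)) = 0)" for x
  proof (rule eval.mn)
    show "eval p (prod_encode (LEAST n. f (prod_encode (n, x)) = 0, x)) 0"
      using p LeastI_ex[OF assms(2)] by metis
    show "\<forall>m<(LEAST n. f (prod_encode (n, x)) = 0). \<exists>v>0. eval p (prod_encode (m, x)) v"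
      using p not_less_Least by blast
  qed
  then show ?thesis unfolding computable_def by blast
qed

lemmas computable_intros =
  computable_pair computable_zero computable_const computable_id computable_Suc
  computable_fst computable_snd computable_pred computable_if_zero computable_funpow

lemma length_le_list_encode: "length xs \<le> list_encode xs"
proof (induction xs)
  case (Cons y xs)
  then show ?case using le_prod_encode_2[of "list_encode xs" y] by simp
qed simp

lemma computable_rev_map:
  assumes f: "computable f"
  shows "computable (\<lambda>x. list_encode (rev (map f (list_decode x))))"
proof -
  text \<open>The state is the pair (unprocessed list, reversed output); since the code of a list
    bounds its length, x steps from state (x, []) suffice.\<close>
  define step where "step w =
    (if fst (prod_decode w) = 0 then w
     else prod_encode (snd (prod_decode (fst (prod_decode w) - 1)),
       Suc (prod_encode (f (fst (prod_decode (fst (prod_decode w) - 1))), snd (prod_decode w)))))"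
    for w
  have step_stops: "(step ^^ m) (prod_encode (0, y)) = prod_encode (0, y)" for m y
    by (induction m) (simp_all add: step_def)
  have step_iter: "(step ^^ n) (prod_encode (list_encode xs, list_encode acc))
      = prod_encode (0, list_encode (rev (map f xs) @ acc))" if "length xs \<le> n" for xs n acc
    using that
  proof (induction xs arbitrary: n acc)
    case (Cons y xs)
    then obtain m where "n = Suc m" "length xs \<le> m" by (cases n) auto
    then show ?case
      using Cons.IH[of m "f y # acc"] by (simp add: step_def funpow_Suc_right del: funpow.simps)
  qed (simp add: step_stops)
  have "list_encode (rev (map f (list_decode x)))
      = snd (prod_decode ((step ^^ x) (prod_encode (x, 0))))" for x
    using step_iter[of "list_decode x" x "[]"] length_le_list_encode[of "list_decode x"] by simp
  moreover have "computable step"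
    unfolding step_def[abs_def] by (intro computable_intros computable_comp[OF f])
  then have "computable (\<lambda>x. snd (prod_decode ((step ^^ x) (prod_encode (x, 0)))))"
    by (intro computable_snd computable_funpow computable_pair computable_id computable_zero)
  ultimately show ?thesis by simp
qed

lemma computable_list_map:
  assumes "computable f"
  shows "computable (\<lambda>x. list_encode (map f (list_decode x)))"
  using computable_comp[OF computable_rev_map[OF computable_id] computable_rev_map[OF assms]]
  by simp

section \<open>Decidable predicates\<close>

definition decidable :: "(nat \<Rightarrow> bool) \<Rightarrow> bool" where
  "decidable P \<longleftrightarrow> (\<exists>d. computable d \<and> (\<forall>x. d x = 0 \<longleftrightarrow> P x))"

lemma decidable_cong: "decidable P \<Longrightarrow> (\<And>x. P x \<longleftrightarrow> Q x) \<Longrightarrow> decidable Q"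
  unfolding decidable_def by simp

lemma decidable_zero: "computable f \<Longrightarrow> decidable (\<lambda>x. f x = 0)"
  unfolding decidable_def by blast

lemma decidable_comp: "decidable P \<Longrightarrow> computable f \<Longrightarrow> decidable (\<lambda>x. P (f x))"
  unfolding decidable_def by (blast intro: computable_comp)

lemma decidable_Not:
  assumes "decidable P"
  shows "decidable (\<lambda>x. \<not> P x)"
proof -
  obtain d where d: "computable d" "\<And>x. d x = 0 \<longleftrightarrow> P x"
    using assms unfolding decidable_def by blast
  have "decidable (\<lambda>x. (if d x = 0 then 1 else 0 :: nat) = 0)"
    by (intro decidable_zero computable_intros d(1))
  then show ?thesis by (rule decidable_cong) (simp add: d(2))
qed

lemma decidable_conj:
  assumes "decidable P" "decidable Q"
  shows "decidable (\<lambda>x. P x \<and> Q x)"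
proof -
  obtain d e where d: "computable d" "\<And>x. d x = 0 \<longleftrightarrow> P x"
    and e: "computable e" "\<And>x. e x = 0 \<longleftrightarrow> Q x"
    using assms unfolding decidable_def by metis
  have "decidable (\<lambda>x. (if d x = 0 then e x else 1) = 0)"
    by (intro decidable_zero computable_intros d(1) e(1))
  then show ?thesis by (rule decidable_cong) (simp add: d(2) e(2))
qed

lemma decidable_disj:
  assumes "decidable P" "decidable Q"
  shows "decidable (\<lambda>x. P x \<or> Q x)"
  using decidable_Not[OF decidable_conj[OF decidable_Not[OF assms(1)] decidable_Not[OF assms(2)]]]
  by (rule decidable_cong) simp

lemma decidable_Bex_list:
  assumes "\<And>k. decidable (P k)"
  shows "decidable (\<lambda>x. \<exists>k\<in>set ks. P k x)"
proof (induction ks)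
  case Nil
  show ?case using decidable_zero[OF computable_const[of 1]] by simp
next
  case (Cons k ks)
  then show ?case using decidable_disj[OF assms] by simp
qed

lemma computable_if:
  assumes "decidable P" "computable f" "computable g"
  shows "computable (\<lambda>x. if P x then f x else g x)"
proof -
  obtain d where "computable d" "\<And>x. d x = 0 \<longleftrightarrow> P x"
    using assms(1) unfolding decidable_def by blast
  then show ?thesis using computable_if_zero[of d f g] assms(2,3) by simp
qed

lemma computable_search:
  assumes R: "decidable (\<lambda>w. R (fst (prod_decode w)) (snd (prod_decode w)))"
    and ex: "decidable (\<lambda>x. \<exists>n. R n x)"
  shows "\<exists>F. computable F \<and>
    (\<forall>x. (F x = 0 \<longleftrightarrow> \<not> (\<exists>n. R n x)) \<and> (\<forall>n. F x = Suc n \<longrightarrow> R n x))"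
proof -
  obtain t where t: "computable t"
    and t_R: "\<And>n x. t (prod_encode (n, x)) = 0 \<longleftrightarrow> R n x"
    using R unfolding decidable_def by (metis prod_encode_inverse fst_conv snd_conv)
  text \<open>t' accepts every n when no witness exists, so the minimisation below is total.\<close>
  define t' where "t' w = (if \<exists>n. R n (snd (prod_decode w)) then t w else 0)" for w
  have t'_ex: "\<exists>n. t' (prod_encode (n, x)) = 0" for x
  proof (cases "\<exists>n. R n x")
    case True
    then obtain n where "R n x" by blast
    then have "t' (prod_encode (n, x)) = 0" unfolding t'_def using t_R by simp
    then show ?thesis ..
  next
    case False
    then have "t' (prod_encode (0, x)) = 0" unfolding t'_def by simp
    then show ?thesis ..
  qed
  define F where "F x = (if \<exists>n. R n x then Suc (LEAST n. t' (prod_encode (n, x)) = 0) else 0)"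
    for x
  have "computable t'"
    unfolding t'_def[abs_def]
    by (intro computable_if decidable_comp[OF ex] computable_snd computable_id t computable_zero)
  then have "computable F"
    unfolding F_def[abs_def]
    by (intro computable_if ex computable_Suc computable_Least t'_ex computable_zero)
  moreover have "R n x" if "F x = Suc n" for n x
  proof -
    have R_ex: "\<exists>n. R n x" and n: "n = (LEAST n. t' (prod_encode (n, x)) = 0)"
      using that unfolding F_def by (auto split: if_splits)
    have "t' (prod_encode (n, x)) = 0" unfolding n by (rule LeastI_ex[OF t'_ex])
    with R_ex show "R n x" unfolding t'_def using t_R by simp
  qed
  moreover have "F x = 0 \<longleftrightarrow> \<not> (\<exists>n. R n x)" for x
    unfolding F_def by simp
  ultimately show ?thesis by blast
qed

section \<open>Conjugators and centralizers\<close>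

lemma (in group) conjugate_eq_iff_mult_inv_in_centralizer:
  assumes a: "a \<in> carrier G" and c: "c \<in> carrier G" and g: "g \<in> carrier G"
  shows "inv g \<otimes> a \<otimes> g = inv c \<otimes> a \<otimes> c \<longleftrightarrow> g \<otimes> inv c \<in> centralizer G a"
proof -
  have "inv g \<otimes> a \<otimes> g = inv c \<otimes> a \<otimes> c \<longleftrightarrow>
      g \<otimes> (inv g \<otimes> a \<otimes> g) \<otimes> inv c = g \<otimes> (inv c \<otimes> a \<otimes> c) \<otimes> inv c"
    using a c g by simp
  also have "\<dots> \<longleftrightarrow> a \<otimes> (g \<otimes> inv c) = g \<otimes> inv c \<otimes> a"
    using a c g by (simp add: m_assoc flip: m_assoc[of g "inv g"] m_assoc[of c "inv c"])
  finally show ?thesis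
    unfolding centralizer_def using a c g by auto
qed

lemma (in group_hom) conjugate_in_preimage_iff:
  assumes K': "K' \<subseteq> carrier H" and a: "a \<in> carrier G" and c: "c \<in> carrier G"
  shows "(\<exists>g\<in>{g \<in> carrier G. h g \<in> K'}. inv g \<otimes> a \<otimes> g = inv c \<otimes> a \<otimes> c) \<longleftrightarrow>
    (\<exists>k\<in>K'. k \<otimes>\<^bsub>H\<^esub> inv\<^bsub>H\<^esub> h c \<in> h ` centralizer G a)"
proof
  assume "\<exists>g\<in>{g \<in> carrier G. h g \<in> K'}. inv g \<otimes> a \<otimes> g = inv c \<otimes> a \<otimes> c"
  then obtain g where g: "g \<in> carrier G" "h g \<in> K'" and "inv g \<otimes> a \<otimes> g = inv c \<otimes> a \<otimes> c"
    by blast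
  then have "g \<otimes> inv c \<in> centralizer G a"
    using G.conjugate_eq_iff_mult_inv_in_centralizer a c by blast
  moreover have "h (g \<otimes> inv c) = h g \<otimes>\<^bsub>H\<^esub> inv\<^bsub>H\<^esub> h c"
    using g c by simp
  ultimately show "\<exists>k\<in>K'. k \<otimes>\<^bsub>H\<^esub> inv\<^bsub>H\<^esub> h c \<in> h ` centralizer G a"
    using g by (metis imageI)
next
  assume "\<exists>k\<in>K'. k \<otimes>\<^bsub>H\<^esub> inv\<^bsub>H\<^esub> h c \<in> h ` centralizer G a"
  then obtain k z where k: "k \<in> K'" and z: "z \<in> centralizer G a"
    and hz: "h z = k \<otimes>\<^bsub>H\<^esub> inv\<^bsub>H\<^esub> h c"
    by auto
  have z_carrier: "z \<in> carrier G" using z unfolding centralizer_def by blast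
  have "z \<otimes> c \<otimes> inv c \<in> centralizer G a"
    using z z_carrier c by (simp add: G.m_assoc)
  then have "inv (z \<otimes> c) \<otimes> a \<otimes> (z \<otimes> c) = inv c \<otimes> a \<otimes> c"
    using G.conjugate_eq_iff_mult_inv_in_centralizer a c z_carrier by blast
  moreover have "h (z \<otimes> c) = k"
    using hz z_carrier c k K' by (auto simp: H.m_assoc)
  ultimately show "\<exists>g\<in>{g \<in> carrier G. h g \<in> K'}. inv g \<otimes> a \<otimes> g = inv c \<otimes> a \<otimes> c"
    using z_carrier c k by (intro bexI[of _ "z \<otimes> c"]) auto
qed

section \<open>Explicit groups\<close>

lemma explicit_conjugacy_decidable_eq:
  assumes G: "explicit_group G \<nu>" and conj: "explicit_conjugacy G \<nu>"
    and f: "computable f" and g: "computable g"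
  shows "decidable (\<lambda>x. \<nu> (f x) = \<nu> (g x))"
proof -
  obtain m i e where "group G" and \<nu>: "range \<nu> = carrier G"
    and m: "computable m" "\<And>x y. \<nu> (m (prod_encode (x, y))) = \<nu> x \<otimes>\<^bsub>G\<^esub> \<nu> y"
    and i: "computable i" "\<And>x. \<nu> (i x) = inv\<^bsub>G\<^esub> \<nu> x"
    and e: "\<nu> e = \<one>\<^bsub>G\<^esub>"
    using G unfolding explicit_group_def by blast
  obtain C where C: "computable C" and C0: "\<And>a b. C (prod_encode (a, b)) = 0 \<longleftrightarrow>
      \<not> (\<exists>c\<in>carrier G. \<nu> a = inv\<^bsub>G\<^esub> c \<otimes>\<^bsub>G\<^esub> \<nu> b \<otimes>\<^bsub>G\<^esub> c)"
    using conj unfolding explicit_conjugacy_def by blast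
  interpret group G by fact
  have \<nu>_carrier: "\<nu> x \<in> carrier G" for x using \<nu> by blast
  have "decidable (\<lambda>x. \<not> C (prod_encode (m (prod_encode (f x, i (g x))), e)) = 0)"
    using computable_comp[OF C computable_pair[OF computable_comp[OF m(1)
        computable_pair[OF f computable_comp[OF i(1) g]]] computable_const]]
    by (intro decidable_Not decidable_zero)
  moreover have "\<not> C (prod_encode (m (prod_encode (f x, i (g x))), e)) = 0 \<longleftrightarrow> \<nu> (f x) = \<nu> (g x)"
    for x
  proof -
    text \<open>Only the identity is conjugate to the identity, so conjugacy to it decides equality.\<close>
    have "(\<exists>c\<in>carrier G. \<nu> (f x) \<otimes>\<^bsub>G\<^esub> inv\<^bsub>G\<^esub> \<nu> (g x) =
        inv\<^bsub>G\<^esub> c \<otimes>\<^bsub>G\<^esub> \<one>\<^bsub>G\<^esub> \<otimes>\<^bsub>G\<^esub> c) \<longleftrightarrow>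
        \<nu> (f x) \<otimes>\<^bsub>G\<^esub> inv\<^bsub>G\<^esub> \<nu> (g x) = \<one>\<^bsub>G\<^esub>"
      using one_closed by fastforce
    also have "\<dots> \<longleftrightarrow> \<nu> (f x) = \<nu> (g x)"
      using inv_solve_right'[OF one_closed \<nu>_carrier \<nu>_carrier] \<nu>_carrier by simp
    finally show ?thesis unfolding C0 m i e by blast
  qed
  ultimately show ?thesis by (rule decidable_cong)
qed

lemma membership_solvable_decidable:
  assumes "membership_solvable K \<mu>" and l: "computable l" and g: "computable g"
  shows "decidable (\<lambda>x. \<mu> (g x) \<in> generate K (set (map \<mu> (list_decode (l x)))))"
proof -
  obtain M where M: "computable M" and M_eq: "\<And>ls g. M (prod_encode (list_encode ls, g)) =
      (if \<mu> g \<in> generate K (set (map \<mu> ls)) then 1 else 0)"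
    using assms(1) unfolding membership_solvable_def by blast
  have "decidable (\<lambda>x. \<not> M (prod_encode (l x, g x)) = 0)"
    by (intro decidable_Not decidable_zero computable_comp[OF M] computable_pair l g)
  moreover have "\<not> M (prod_encode (l x, g x)) = 0 \<longleftrightarrow>
      \<mu> (g x) \<in> generate K (set (map \<mu> (list_decode (l x))))" for x
    using M_eq[of "list_decode (l x)" "g x"] by simp
  ultimately show ?thesis by (rule decidable_cong)
qed

lemma decidable_mem_listed_subgroup:
  assumes "group K" and mem: "membership_solvable K \<mu>" and "subgroup K' K"
    and ks: "set (map \<mu> ks) = K'" and f: "computable f"
  shows "decidable (\<lambda>x. \<mu> (f x) \<in> K')"
proof -
  have "K' = generate K (set (map \<mu> (list_decode (list_encode ks))))"
    using group.generateI[OF assms(1,3) order_refl] ks by simp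
  then show ?thesis
    using membership_solvable_decidable[OF mem computable_const[of "list_encode ks"] f] by simp
qed

lemma computable_centralizer_image_generators:
  assumes G: "explicit_group G \<nu>" and cent: "computable_centralizers G \<nu>"
    and hom: "group_hom G K \<phi>" and f: "computable f" "\<And>x. \<mu> (f x) = \<phi> (\<nu> x)"
  shows "\<exists>L. computable L \<and>
    (\<forall>a. generate K (set (map \<mu> (list_decode (L a)))) = \<phi> ` centralizer G (\<nu> a))"
proof -
  obtain Z where Z: "computable Z"
    and Z_gen: "\<And>a. generate G (set (map \<nu> (list_decode (Z a)))) = centralizer G (\<nu> a)"
    using cent unfolding computable_centralizers_def by blast
  have \<nu>: "range \<nu> \<subseteq> carrier G" using G unfolding explicit_group_def by blast
  have "generate K (set (map \<mu> (map f (list_decode (Z a))))) = \<phi> ` centralizer G (\<nu> a)" for a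
  proof -
    have "set (map \<mu> (map f (list_decode (Z a)))) = \<phi> ` set (map \<nu> (list_decode (Z a)))"
      by (force simp: f(2))
    moreover have "set (map \<nu> (list_decode (Z a))) \<subseteq> carrier G" using \<nu> by auto
    ultimately show ?thesis
      by (simp only: group_hom.generate_img[OF hom] Z_gen)
  qed
  moreover have "computable (\<lambda>a. list_encode (map f (list_decode (Z a))))"
    by (rule computable_comp[OF computable_list_map[OF f(1)] Z])
  ultimately show ?thesis by (intro exI[of _ "\<lambda>a. list_encode (map f (list_decode (Z a)))"]) simp
qed

lemma decidable_conjugacy_in_preimage:
  assumes G: "explicit_group G \<nu>" and conj: "explicit_conjugacy G \<nu>"
    and cent: "computable_centralizers G \<nu>" and K: "explicit_group K \<mu>"
    and mem: "membership_solvable K \<mu>" and hom: "\<phi> \<in> hom G K"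
    and f: "computable f" "\<And>x. \<mu> (f x) = \<phi> (\<nu> x)" and ks: "set (map \<mu> ks) = K'"
  shows "decidable (\<lambda>x. \<exists>h\<in>{g \<in> carrier G. \<phi> g \<in> K'}.
    \<nu> (snd (prod_decode x)) = inv\<^bsub>G\<^esub> h \<otimes>\<^bsub>G\<^esub> \<nu> (fst (prod_decode x)) \<otimes>\<^bsub>G\<^esub> h)"
proof -
  obtain mK iK where "group K" and \<mu>: "range \<mu> = carrier K"
    and mK: "computable mK" "\<And>x y. \<mu> (mK (prod_encode (x, y))) = \<mu> x \<otimes>\<^bsub>K\<^esub> \<mu> y"
    and iK: "computable iK" "\<And>x. \<mu> (iK x) = inv\<^bsub>K\<^esub> \<mu> x"
    using K unfolding explicit_group_def by blast
  have "group G" and \<nu>: "range \<nu> = carrier G"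
    using G unfolding explicit_group_def by auto
  have \<phi>: "group_hom G K \<phi>"
    using hom \<open>group G\<close> \<open>group K\<close> by (simp add: group_hom_def group_hom_axioms_def)
  interpret \<phi>: group_hom G K \<phi> by (fact \<phi>)
  obtain C where C: "computable C"
    and C0: "\<And>a b. C (prod_encode (a, b)) = 0 \<longleftrightarrow>
      \<not> (\<exists>c\<in>carrier G. \<nu> a = inv\<^bsub>G\<^esub> c \<otimes>\<^bsub>G\<^esub> \<nu> b \<otimes>\<^bsub>G\<^esub> c)"
    and C_Suc: "\<And>a b c. C (prod_encode (a, b)) = Suc c \<Longrightarrow>
      \<nu> a = inv\<^bsub>G\<^esub> \<nu> c \<otimes>\<^bsub>G\<^esub> \<nu> b \<otimes>\<^bsub>G\<^esub> \<nu> c"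
    using conj unfolding explicit_conjugacy_def by blast
  obtain L where L: "computable L"
    and L_gen: "\<And>a. generate K (set (map \<mu> (list_decode (L a)))) = \<phi> ` centralizer G (\<nu> a)"
    using computable_centralizer_image_generators[OF G cent \<phi> f] by blast
  have K'_carrier: "K' \<subseteq> carrier K" using ks \<mu> by auto
  let ?a = "\<lambda>x. fst (prod_decode x)" and ?b = "\<lambda>x. snd (prod_decode x)"
  let ?c = "\<lambda>x. C (prod_encode (?b x, ?a x))"
  have "decidable (\<lambda>x. \<not> ?c x = 0 \<and> (\<exists>k\<in>set ks. \<mu> (mK (prod_encode (k, iK (f (?c x - 1)))))
      \<in> generate K (set (map \<mu> (list_decode (L (?a x)))))))"
    by (intro decidable_conj decidable_Not decidable_zero decidable_Bex_list
        membership_solvable_decidable[OF mem] computable_comp[OF C] computable_comp[OF L]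
        computable_comp[OF mK(1)] computable_comp[OF iK(1)] computable_comp[OF f(1)]
        computable_pair computable_fst computable_snd computable_pred computable_id computable_const)
  moreover have "\<not> ?c x = 0 \<and> (\<exists>k\<in>set ks. \<mu> (mK (prod_encode (k, iK (f (?c x - 1)))))
      \<in> generate K (set (map \<mu> (list_decode (L (?a x)))))) \<longleftrightarrow>
    (\<exists>h\<in>{g \<in> carrier G. \<phi> g \<in> K'}. \<nu> (?b x) = inv\<^bsub>G\<^esub> h \<otimes>\<^bsub>G\<^esub> \<nu> (?a x) \<otimes>\<^bsub>G\<^esub> h)" for x
  proof (cases "?c x")
    case 0
    then show ?thesis using C0 by auto
  next
    case (Suc c)
    then have b: "\<nu> (?b x) = inv\<^bsub>G\<^esub> \<nu> c \<otimes>\<^bsub>G\<^esub> \<nu> (?a x) \<otimes>\<^bsub>G\<^esub> \<nu> c"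
      by (rule C_Suc)
    have "(\<exists>h\<in>{g \<in> carrier G. \<phi> g \<in> K'}. \<nu> (?b x) = inv\<^bsub>G\<^esub> h \<otimes>\<^bsub>G\<^esub> \<nu> (?a x) \<otimes>\<^bsub>G\<^esub> h) \<longleftrightarrow>
        (\<exists>k\<in>K'. k \<otimes>\<^bsub>K\<^esub> inv\<^bsub>K\<^esub> \<phi> (\<nu> c) \<in> \<phi> ` centralizer G (\<nu> (?a x)))"
      unfolding b using \<phi>.conjugate_in_preimage_iff[OF K'_carrier] \<nu> by (auto simp: eq_commute)
    also have "\<dots> \<longleftrightarrow> (\<exists>k\<in>set ks. \<mu> (mK (prod_encode (k, iK (f c))))
        \<in> generate K (set (map \<mu> (list_decode (L (?a x))))))"
      unfolding ks[symmetric] L_gen by (simp add: mK(2) iK(2) f(2))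
    finally show ?thesis using Suc by simp
  qed
  ultimately show ?thesis by (rule decidable_cong)
qed

lemma decidable_conjugator_in_preimage:
  assumes G: "explicit_group G \<nu>" and conj: "explicit_conjugacy G \<nu>"
    and K: "explicit_group K \<mu>" and mem: "membership_solvable K \<mu>"
    and K'_sub: "subgroup K' K" and ks: "set (map \<mu> ks) = K'"
    and f: "computable f" "\<And>x. \<mu> (f x) = \<phi> (\<nu> x)"
  shows "decidable (\<lambda>w. \<nu> (fst (prod_decode w)) \<in> {g \<in> carrier G. \<phi> g \<in> K'} \<and>
    \<nu> (snd (prod_decode (snd (prod_decode w)))) = inv\<^bsub>G\<^esub> \<nu> (fst (prod_decode w))
      \<otimes>\<^bsub>G\<^esub> \<nu> (fst (prod_decode (snd (prod_decode w)))) \<otimes>\<^bsub>G\<^esub> \<nu> (fst (prod_decode w)))"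
proof -
  obtain m i where \<nu>: "range \<nu> = carrier G"
    and m: "computable m" "\<And>x y. \<nu> (m (prod_encode (x, y))) = \<nu> x \<otimes>\<^bsub>G\<^esub> \<nu> y"
    and i: "computable i" "\<And>x. \<nu> (i x) = inv\<^bsub>G\<^esub> \<nu> x"
    using G unfolding explicit_group_def by blast
  have "group K" using K unfolding explicit_group_def by blast
  have "decidable (\<lambda>w. \<mu> (f (fst (prod_decode w))) \<in> K' \<and>
      \<nu> (snd (prod_decode (snd (prod_decode w)))) = \<nu> (m (prod_encode (m (prod_encode
        (i (fst (prod_decode w)), fst (prod_decode (snd (prod_decode w))))), fst (prod_decode w)))))"
    by (intro decidable_conj decidable_mem_listed_subgroup[OF \<open>group K\<close> mem K'_sub ks]
        explicit_conjugacy_decidable_eq[OF G conj] computable_comp[OF f(1)]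
        computable_comp[OF m(1)] computable_comp[OF i(1)] computable_pair computable_fst
        computable_snd computable_id)
  then show ?thesis
    by (rule decidable_cong) (use \<nu> in \<open>auto simp: f(2) m(2) i(2)\<close>)
qed

lemma subgroup_explicit_conjugacy_by_search:
  assumes H: "H \<subseteq> range \<nu>"
    and conjugator: "decidable (\<lambda>w. \<nu> (fst (prod_decode w)) \<in> H \<and>
      \<nu> (snd (prod_decode (snd (prod_decode w)))) = inv\<^bsub>G\<^esub> \<nu> (fst (prod_decode w))
        \<otimes>\<^bsub>G\<^esub> \<nu> (fst (prod_decode (snd (prod_decode w)))) \<otimes>\<^bsub>G\<^esub> \<nu> (fst (prod_decode w)))"
    and conjugate: "decidable (\<lambda>x. \<exists>h\<in>H.
      \<nu> (snd (prod_decode x)) = inv\<^bsub>G\<^esub> h \<otimes>\<^bsub>G\<^esub> \<nu> (fst (prod_decode x)) \<otimes>\<^bsub>G\<^esub> h)"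
  shows "subgroup_explicit_conjugacy G \<nu> H"
proof -
  define R where "R n x \<longleftrightarrow>
    \<nu> n \<in> H \<and> \<nu> (snd (prod_decode x)) = inv\<^bsub>G\<^esub> \<nu> n \<otimes>\<^bsub>G\<^esub> \<nu> (fst (prod_decode x)) \<otimes>\<^bsub>G\<^esub> \<nu> n"
    for n x
  have R_ex: "(\<exists>n. R n x) \<longleftrightarrow>
      (\<exists>h\<in>H. \<nu> (snd (prod_decode x)) = inv\<^bsub>G\<^esub> h \<otimes>\<^bsub>G\<^esub> \<nu> (fst (prod_decode x)) \<otimes>\<^bsub>G\<^esub> h)" for x
    unfolding R_def using H by blast
  obtain F where F: "computable F"
    and F_0: "\<And>x. F x = 0 \<longleftrightarrow> \<not> (\<exists>n. R n x)" and F_Suc: "\<And>x n. F x = Suc n \<Longrightarrow> R n x"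
    using computable_search[of R] conjugator decidable_cong[OF conjugate R_ex[symmetric]]
    unfolding R_def by blast
  obtain p where p: "\<And>x. eval p x (F x)" using F unfolding computable_def by blast
  show ?thesis
    unfolding subgroup_explicit_conjugacy_def
  proof (intro exI[of _ p] allI impI)
    fix a b
    let ?x = "prod_encode (a, b)"
    have R_ab: "R n ?x \<longleftrightarrow> \<nu> n \<in> H \<and> \<nu> b = inv\<^bsub>G\<^esub> \<nu> n \<otimes>\<^bsub>G\<^esub> \<nu> a \<otimes>\<^bsub>G\<^esub> \<nu> n" for n
      unfolding R_def by simp
    show "\<exists>r. eval p ?x r
      \<and> (r = 0 \<longleftrightarrow> \<not> (\<exists>h\<in>H. \<nu> b = inv\<^bsub>G\<^esub> h \<otimes>\<^bsub>G\<^esub> \<nu> a \<otimes>\<^bsub>G\<^esub> h))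
      \<and> (\<forall>h'. r = Suc h' \<longrightarrow> \<nu> h' \<in> H \<and> \<nu> b = inv\<^bsub>G\<^esub> (\<nu> h') \<otimes>\<^bsub>G\<^esub> \<nu> a \<otimes>\<^bsub>G\<^esub> \<nu> h')"
    proof (intro exI[of _ "F ?x"] conjI allI impI)
      show "eval p ?x (F ?x)" by (rule p)
      show "F ?x = 0 \<longleftrightarrow> \<not> (\<exists>h\<in>H. \<nu> b = inv\<^bsub>G\<^esub> h \<otimes>\<^bsub>G\<^esub> \<nu> a \<otimes>\<^bsub>G\<^esub> h)"
        using F_0[of ?x] R_ex[of ?x] by (simp only: prod_encode_inverse fst_conv snd_conv)
      fix h' assume "F ?x = Suc h'"
      then show "\<nu> h' \<in> H" and "\<nu> b = inv\<^bsub>G\<^esub> (\<nu> h') \<otimes>\<^bsub>G\<^esub> \<nu> a \<otimes>\<^bsub>G\<^esub> \<nu> h'"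
        using F_Suc R_ab by blast+
    qed
  qed
qed

theorem mainTheorem4:
  fixes G :: "('a, 'm) monoid_scheme" and \<nu> :: "nat \<Rightarrow> 'a"
    and K :: "('b, 'n) monoid_scheme" and \<mu> :: "nat \<Rightarrow> 'b"
    and \<phi> :: "'a \<Rightarrow> 'b" and K' :: "'b set" and H :: "'a set"
    and ks :: "nat list"
  assumes G: "explicit_group G \<nu>"
    and conjG: "explicit_conjugacy G \<nu>"
    and centG: "computable_centralizers G \<nu>"
    and K: "explicit_group K \<mu>"
    and memK: "membership_solvable K \<mu>"
    and hom: "\<phi> \<in> hom G K"
    and phi_comp: "\<exists>f. computable f \<and> (\<forall>x. \<mu> (f x) = \<phi> (\<nu> x))"
    and K'_sub: "subgroup K' K"
    and K'_list: "set (map \<mu> ks) = K'"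
    and H_def: "H = {g \<in> carrier G. \<phi> g \<in> K'}"
  shows "subgroup_explicit_conjugacy G \<nu> H"
proof -
  obtain f where f: "computable f" "\<And>x. \<mu> (f x) = \<phi> (\<nu> x)" using phi_comp by blast
  have "H \<subseteq> range \<nu>" using G unfolding H_def explicit_group_def by auto
  moreover have "decidable (\<lambda>w. \<nu> (fst (prod_decode w)) \<in> H \<and>
      \<nu> (snd (prod_decode (snd (prod_decode w)))) = inv\<^bsub>G\<^esub> \<nu> (fst (prod_decode w))
        \<otimes>\<^bsub>G\<^esub> \<nu> (fst (prod_decode (snd (prod_decode w)))) \<otimes>\<^bsub>G\<^esub> \<nu> (fst (prod_decode w)))"
    unfolding H_def by (rule decidable_conjugator_in_preimage[OF G conjG K memK K'_sub K'_list f])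
  moreover have "decidable (\<lambda>x. \<exists>h\<in>H.
      \<nu> (snd (prod_decode x)) = inv\<^bsub>G\<^esub> h \<otimes>\<^bsub>G\<^esub> \<nu> (fst (prod_decode x)) \<otimes>\<^bsub>G\<^esub> h)"
    unfolding H_def by (rule decidable_conjugacy_in_preimage[OF G conjG centG K memK hom f K'_list])
  ultimately show ?thesis by (rule subgroup_explicit_conjugacy_by_search)
qed

end
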